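(* Every stick graph is a grounded L-graph. Moreover, if $G$ is a stick graph with a stick representation in which the vertices of $A$ are vertical segments and the vertices of $B$ are horizontal segments, then $G$ has a grounded L-representation that is nice with respect to the bipartition $(A,B)$.
   Context: An L-shape is the union of a vertical segment and a horizontal segment such that the bottom end-point of the vertical segment coincides with the left end-point of the horizontal segment; the top end-point of the vertical segment is its anchor. A grounded L-representation of a graph assigns an L-shape to each vertex, all anchors lying on a common horizontal line, so that two vertices are adjacent iff their L-shapes intersect; a graph having one is a grounded L-graph. A stick graph is a bipartite graph $G=(A\cup B,E)$ that is the intersection graph of a set of vertical segments (representing $A$) and a set of horizontal segments (representing $B$) such that the bottom end-points of the vertical segments and the left end-points of the horizontal segments all lie on a common straight line of slope $-1$; this is a stick representation. For a bipartite graph $G=(A\cup B,E)$, a grounded L-representation is nice (with respect to $(A,B)$) if every L-shape representing a vertex of $A$ meets other L-shapes only on its horizontal segment, and every L-shape representing a vertex of $B$ meets other L-shapes only on its vertical segment. *)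

theory Defs
  imports Complex_Main
begin

definition simple_graph :: "'v set \<Rightarrow> ('v \<Rightarrow> 'v \<Rightarrow> bool) \<Rightarrow> bool" where
  "simple_graph V E \<longleftrightarrow>
     (\<forall>u v. E u v \<longrightarrow> u \<in> V \<and> v \<in> V) \<and>
     (\<forall>u v. E u v \<longrightarrow> E v u) \<and> (\<forall>v. \<not> E v v)"

definition bipartition :: "'v set \<Rightarrow> ('v \<Rightarrow> 'v \<Rightarrow> bool) \<Rightarrow> 'v set \<Rightarrow> 'v set \<Rightarrow> bool" where
  "bipartition V E A B \<longleftrightarrow>
     A \<inter> B = {} \<and> A \<union> B = V \<and>
     (\<forall>u\<in>A. \<forall>v\<in>A. \<not> E u v) \<and> (\<forall>u\<in>B. \<forall>v\<in>B. \<not> E u v)"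

text \<open>An L-shape (x, t, b, r): vertical segment from the anchor (x,t) down to (x,b),
  horizontal segment from (x,b) to (r,b). Both segments are non-degenerate.\<close>
type_synonym lshape = "real \<times> real \<times> real \<times> real"

definition valid_L :: "lshape \<Rightarrow> bool" where
  "valid_L l = (case l of (x, t, b, r) \<Rightarrow> b < t \<and> x < r)"

definition anchor :: "lshape \<Rightarrow> real \<times> real" where
  "anchor l = (case l of (x, t, b, r) \<Rightarrow> (x, t))"

definition vert_part :: "lshape \<Rightarrow> (real \<times> real) set" where
  "vert_part l = (case l of (x, t, b, r) \<Rightarrow> {(x, y) | y. b \<le> y \<and> y \<le> t})"

definition horiz_part :: "lshape \<Rightarrow> (real \<times> real) set" where
  "horiz_part l = (case l of (x, t, b, r) \<Rightarrow> {(z, b) | z. x \<le> z \<and> z \<le> r})"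

definition Lset :: "lshape \<Rightarrow> (real \<times> real) set" where
  "Lset l = vert_part l \<union> horiz_part l"

definition grounded_L_rep :: "'v set \<Rightarrow> ('v \<Rightarrow> 'v \<Rightarrow> bool) \<Rightarrow> ('v \<Rightarrow> lshape) \<Rightarrow> bool" where
  "grounded_L_rep V E L \<longleftrightarrow>
     (\<forall>v\<in>V. valid_L (L v)) \<and>
     (\<exists>c. \<forall>v\<in>V. snd (anchor (L v)) = c) \<and>
     (\<forall>u\<in>V. \<forall>v\<in>V. u \<noteq> v \<longrightarrow> (E u v \<longleftrightarrow> Lset (L u) \<inter> Lset (L v) \<noteq> {}))"

definition grounded_L_graph :: "'v set \<Rightarrow> ('v \<Rightarrow> 'v \<Rightarrow> bool) \<Rightarrow> bool" where
  "grounded_L_graph V E \<longleftrightarrow> (\<exists>L. grounded_L_rep V E L)"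

definition nice_L_rep ::
  "'v set \<Rightarrow> 'v set \<Rightarrow> 'v set \<Rightarrow> ('v \<Rightarrow> lshape) \<Rightarrow> bool" where
  "nice_L_rep V A B L \<longleftrightarrow>
     (\<forall>a\<in>A. \<forall>u\<in>V. u \<noteq> a \<longrightarrow> Lset (L a) \<inter> Lset (L u) \<subseteq> horiz_part (L a)) \<and>
     (\<forall>b\<in>B. \<forall>u\<in>V. u \<noteq> b \<longrightarrow> Lset (L b) \<inter> Lset (L u) \<subseteq> vert_part (L b))"

text \<open>The common line is y = c - x (slope -1). A stick is given by (p, h): its
  bottom/left end-point is (p, c - p), and h > 0 is its length.\<close>
definition vstick :: "real \<Rightarrow> real \<times> real \<Rightarrow> (real \<times> real) set" where
  "vstick c s = (case s of (p, h) \<Rightarrow> {(p, y) | y. c - p \<le> y \<and> y \<le> c - p + h})"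

definition hstick :: "real \<Rightarrow> real \<times> real \<Rightarrow> (real \<times> real) set" where
  "hstick c s = (case s of (q, w) \<Rightarrow> {(z, c - q) | z. q \<le> z \<and> z \<le> q + w})"

definition stick_rep ::
  "'v set \<Rightarrow> ('v \<Rightarrow> 'v \<Rightarrow> bool) \<Rightarrow> 'v set \<Rightarrow> 'v set \<Rightarrow> real \<Rightarrow> ('v \<Rightarrow> real \<times> real) \<Rightarrow> bool" where
  "stick_rep V E A B c S \<longleftrightarrow>
     bipartition V E A B \<and>
     (\<forall>v\<in>V. snd (S v) > 0) \<and>
     (\<forall>a\<in>A. \<forall>b\<in>B. E a b \<longleftrightarrow> vstick c (S a) \<inter> hstick c (S b) \<noteq> {})"

definition stick_graph :: "'v set \<Rightarrow> ('v \<Rightarrow> 'v \<Rightarrow> bool) \<Rightarrow> bool" where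
  "stick_graph V E \<longleftrightarrow> (\<exists>A B c S. stick_rep V E A B c S)"

end

theory Submission
  imports Defs "HOL-Analysis.Elementary_Metric_Spaces"
begin

text \<open>Place the anchors on a horizontal line in the reverse order of the sticks: the vertex whose
  stick starts at \<open>(p, c - p)\<close> is anchored near \<open>-p\<close>, a vertex of \<open>A\<close> slightly left of a vertex
  of \<open>B\<close> with the same \<open>p\<close>. A vertical stick \<open>a\<close> and a horizontal stick \<open>b\<close> meet iff
  \<open>0 \<le> p\<^sub>a - p\<^sub>b \<le> min h\<^sub>a h\<^sub>b\<close>, i.e. iff \<open>b\<close> is anchored at most \<open>h\<^sub>a\<close> to the right of \<open>a\<close>
  and \<open>a\<close> at most \<open>h\<^sub>b\<close> to the left of \<open>b\<close>. So give \<open>a\<close> a horizontal arm of length about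
  \<open>h\<^sub>a\<close>, at a height increasing strictly with the anchor, and give \<open>b\<close> a negligible arm and a
  vertical segment reaching down to the height of the position \<open>h\<^sub>b\<close> to its left: then the two
  L-shapes meet iff \<open>a\<close> and \<open>b\<close> are adjacent, and only on the arm of \<open>a\<close> and the vertical
  segment of \<open>b\<close>. Ties are broken by perturbations smaller than the least nonzero absolute
  value of the finitely many quantities \<open>p\<^sub>u - p\<^sub>v - k\<close>, \<open>k \<in> {0, h\<^sub>u, h\<^sub>v}\<close>, so they change no
  comparison that matters.\<close>

lemma Lset_inter_nonempty_iff:
  assumes "x1 < x2" "b1 \<le> t"
  shows "Lset (x1, t, b1, r1) \<inter> Lset (x2, t, b2, r2) \<noteq> {} \<longleftrightarrow> x2 \<le> r1 \<and> b2 \<le> b1"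
proof
  assume "Lset (x1, t, b1, r1) \<inter> Lset (x2, t, b2, r2) \<noteq> {}"
  then show "x2 \<le> r1 \<and> b2 \<le> b1"
    using assms by (auto simp: Lset_def vert_part_def horiz_part_def)
next
  assume "x2 \<le> r1 \<and> b2 \<le> b1"
  then have "(x2, b1) \<in> Lset (x1, t, b1, r1) \<inter> Lset (x2, t, b2, r2)"
    using assms by (auto simp: Lset_def vert_part_def horiz_part_def)
  then show "Lset (x1, t, b1, r1) \<inter> Lset (x2, t, b2, r2) \<noteq> {}" by blast
qed

lemma Lset_inter_subset_horiz_part:
  "x1 < x2 \<Longrightarrow> Lset (x1, t1, b1, r1) \<inter> Lset (x2, t2, b2, r2) \<subseteq> horiz_part (x1, t1, b1, r1)"
  by (auto simp: Lset_def vert_part_def horiz_part_def)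

lemma Lset_inter_subset_vert_part:
  "x1 < x2 \<Longrightarrow> b1 \<noteq> b2 \<Longrightarrow>
     Lset (x1, t1, b1, r1) \<inter> Lset (x2, t2, b2, r2) \<subseteq> vert_part (x2, t2, b2, r2)"
  by (auto simp: Lset_def vert_part_def horiz_part_def)

lemma Lset_inter_empty:
  "x1 \<le> r1 \<Longrightarrow> r1 < x2 \<Longrightarrow> Lset (x1, t1, b1, r1) \<inter> Lset (x2, t2, b2, r2) = {}"
  by (auto simp: Lset_def vert_part_def horiz_part_def)

lemma vstick_inter_hstick_nonempty_iff:
  "vstick c (p, h) \<inter> hstick c (q, w) \<noteq> {} \<longleftrightarrow> 0 \<le> p - q \<and> p - q \<le> w \<and> p - q \<le> h"
proof
  assume "vstick c (p, h) \<inter> hstick c (q, w) \<noteq> {}"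
  then show "0 \<le> p - q \<and> p - q \<le> w \<and> p - q \<le> h"
    by (auto simp: vstick_def hstick_def)
next
  assume "0 \<le> p - q \<and> p - q \<le> w \<and> p - q \<le> h"
  then have "(p, c - q) \<in> vstick c (p, h) \<inter> hstick c (q, w)"
    by (auto simp: vstick_def hstick_def)
  then show "vstick c (p, h) \<inter> hstick c (q, w) \<noteq> {}" by blast
qed

lemma finite_inj_on_into_Ico:
  fixes e :: real
  assumes "finite V" "0 < e"
  shows "\<exists>s. inj_on s V \<and> s ` V \<subseteq> {0..<e}"
proof -
  obtain f :: "'a \<Rightarrow> nat" and n where f: "f ` V = {..<n}" "inj_on f V"
    using finite_imp_inj_to_nat_seg[OF assms(1)] by (auto simp: lessThan_def)
  define s where "s v = e * real (f v) / real n" for v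
  have "inj_on s V"
    using f assms(2) by (auto simp: inj_on_def s_def)
  moreover have "s v \<in> {0..<e}" if "v \<in> V" for v
  proof -
    have "f v < n" using f(1) that by blast
    then show ?thesis using assms(2) by (simp add: s_def field_simps)
  qed
  ultimately show ?thesis by blast
qed

definition mutual_reach_rep ::
  "'v set \<Rightarrow> ('v \<Rightarrow> 'v \<Rightarrow> bool) \<Rightarrow> 'v set \<Rightarrow> 'v set \<Rightarrow>
     ('v \<Rightarrow> real) \<Rightarrow> ('v \<Rightarrow> real) \<Rightarrow> ('v \<Rightarrow> real) \<Rightarrow> bool" where
  "mutual_reach_rep V E A B x fwd bwd \<longleftrightarrow>
     inj_on x V \<and> (\<forall>a\<in>A. x a < fwd a) \<and>
     (\<forall>a\<in>A. \<forall>b\<in>B. bwd b \<noteq> x a \<and> (E a b \<longleftrightarrow> x a < x b \<and> x b \<le> fwd a \<and> bwd b \<le> x a))"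

locale reach_construction =
  fixes V :: "'v set" and E :: "'v \<Rightarrow> 'v \<Rightarrow> bool" and A B :: "'v set"
    and x fwd bwd :: "'v \<Rightarrow> real" and \<eta> :: real
  assumes simple: "simple_graph V E"
    and bip: "bipartition V E A B"
    and reach: "mutual_reach_rep V E A B x fwd bwd"
    and \<eta>_pos: "0 < \<eta>"
    and \<eta>_gap: "\<And>u v. u \<in> V \<Longrightarrow> v \<in> V \<Longrightarrow> x u < x v \<Longrightarrow> x u + \<eta> < x v"
begin

text \<open>The height \<open>- exp (- t)\<close> is negative and strictly increasing in \<open>t\<close>: the arm of
  \<open>a \<in> A\<close> lies at the height of its own anchor, and the vertical segment of \<open>b \<in> B\<close> goes down
  to the height of position \<open>bwd b\<close>, so it reaches the arm of \<open>a\<close> exactly when \<open>bwd b \<le> x a\<close>.\<close>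

definition L :: "'v \<Rightarrow> lshape" where
  "L v = (if v \<in> A then (x v, 0, - exp (- x v), fwd v) else (x v, 0, - exp (- bwd v), x v + \<eta>))"

lemma L_valid: "v \<in> V \<Longrightarrow> valid_L (L v)"
  using reach \<eta>_pos by (auto simp: L_def valid_L_def mutual_reach_rep_def)

lemma L_inter_subset_horiz_part:
  "x u < x v \<Longrightarrow> Lset (L u) \<inter> Lset (L v) \<subseteq> horiz_part (L u)"
  by (simp add: L_def Lset_inter_subset_horiz_part)

lemma L_inter_empty_if_left_not_in_A:
  assumes "u \<in> V" "v \<in> V" "u \<notin> A" "x u < x v"
  shows "Lset (L u) \<inter> Lset (L v) = {}"
proof -
  obtain b r where "L v = (x v, 0, b, r)" by (cases "v \<in> A") (simp_all add: L_def)
  moreover have "L u = (x u, 0, - exp (- bwd u), x u + \<eta>)" using assms(3) by (simp add: L_def)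
  ultimately show ?thesis
    using \<eta>_pos \<eta>_gap[OF assms(1,2,4)] by (simp add: Lset_inter_empty)
qed

lemma L_inter_empty_if_both_in_A:
  assumes "u \<in> A" "v \<in> A" "x u < x v"
  shows "Lset (L u) \<inter> Lset (L v) = {}"
  using assms Lset_inter_nonempty_iff[of "x u" "x v" "- exp (- x u)" 0 "fwd u" "- exp (- x v)" "fwd v"]
  by (simp add: L_def)

lemma L_inter_A_B:
  assumes "a \<in> A" "b \<in> B" "x a < x b"
  shows "Lset (L a) \<inter> Lset (L b) \<noteq> {} \<longleftrightarrow> E a b"
    and "Lset (L a) \<inter> Lset (L b) \<subseteq> vert_part (L b)"
proof -
  have "b \<notin> A" using bip assms(2) by (auto simp: bipartition_def)
  then have L: "L a = (x a, 0, - exp (- x a), fwd a)" "L b = (x b, 0, - exp (- bwd b), x b + \<eta>)"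
    using assms(1) by (simp_all add: L_def)
  have "E a b \<longleftrightarrow> x b \<le> fwd a \<and> bwd b \<le> x a" and "bwd b \<noteq> x a"
    using reach assms by (auto simp: mutual_reach_rep_def)
  then show "Lset (L a) \<inter> Lset (L b) \<noteq> {} \<longleftrightarrow> E a b"
    and "Lset (L a) \<inter> Lset (L b) \<subseteq> vert_part (L b)"
    unfolding L using assms(3)
    by (simp_all add: Lset_inter_nonempty_iff Lset_inter_subset_vert_part)
qed

lemma edge_goes_from_A_to_B:
  assumes "u \<in> V" "v \<in> V" "x u < x v" "E u v"
  shows "u \<in> A \<and> v \<in> B"
proof -
  have "E v u" using simple assms(4) by (simp add: simple_graph_def)
  then have "\<not> (v \<in> A \<and> u \<in> B)" using reach assms(3) by (auto simp: mutual_reach_rep_def)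
  then show ?thesis using bip assms by (auto simp: bipartition_def)
qed

lemma anchors_distinct:
  assumes "u \<in> V" "v \<in> V" "u \<noteq> v"
  shows "x u < x v \<or> x v < x u"
proof -
  have "x u \<noteq> x v" using reach assms by (auto simp: mutual_reach_rep_def inj_on_def)
  then show ?thesis by linarith
qed

lemma L_inter_empty_unless_A_B:
  assumes "u \<in> V" "v \<in> V" "x u < x v" "\<not> (u \<in> A \<and> v \<in> B)"
  shows "Lset (L u) \<inter> Lset (L v) = {}"
proof (cases "u \<in> A")
  case True
  then have "v \<in> A" using bip assms(2,4) by (auto simp: bipartition_def)
  with True show ?thesis using assms(3) by (rule L_inter_empty_if_both_in_A)
qed (use assms L_inter_empty_if_left_not_in_A in blast)

lemma grounded_nice_L: "grounded_L_rep V E L \<and> nice_L_rep V A B L"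
proof -
  have meet_if_less: "E u v \<longleftrightarrow> Lset (L u) \<inter> Lset (L v) \<noteq> {}"
    if "u \<in> V" "v \<in> V" "x u < x v" for u v
    using that L_inter_A_B(1) L_inter_empty_unless_A_B edge_goes_from_A_to_B by blast
  have meet: "E u v \<longleftrightarrow> Lset (L u) \<inter> Lset (L v) \<noteq> {}"
    if "u \<in> V" "v \<in> V" "u \<noteq> v" for u v
    using anchors_distinct[OF that] meet_if_less that simple
    by (metis Int_commute simple_graph_def)
  have horiz: "Lset (L a) \<inter> Lset (L u) \<subseteq> horiz_part (L a)"
    if "a \<in> A" "u \<in> V" "u \<noteq> a" for a u
  proof -
    have "a \<in> V" "a \<notin> B" using bip that(1) by (auto simp: bipartition_def)
    then show ?thesis
      using anchors_distinct[of a u] that L_inter_subset_horiz_part L_inter_empty_unless_A_B[of u a]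
      by (auto simp: Int_commute)
  qed
  have vert: "Lset (L b) \<inter> Lset (L u) \<subseteq> vert_part (L b)"
    if "b \<in> B" "u \<in> V" "u \<noteq> b" for b u
  proof -
    have "b \<in> V" "b \<notin> A" using bip that(1) by (auto simp: bipartition_def)
    then show ?thesis
      using anchors_distinct[of b u] that L_inter_A_B(2)[of u b] L_inter_empty_unless_A_B
      by (auto simp: Int_commute)
  qed
  have "\<forall>v\<in>V. snd (anchor (L v)) = 0" by (simp add: L_def anchor_def)
  then have "grounded_L_rep V E L"
    unfolding grounded_L_rep_def using L_valid meet by blast
  moreover have "nice_L_rep V A B L"
    unfolding nice_L_rep_def using horiz vert by blast
  ultimately show ?thesis ..
qed

end

lemma mutual_reach_rep_imp_nice_grounded_L_rep:
  assumes "finite V" "simple_graph V E" "bipartition V E A B" "mutual_reach_rep V E A B x fwd bwd"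
  shows "\<exists>L. grounded_L_rep V E L \<and> nice_L_rep V A B L"
proof -
  have "finite ((\<lambda>(u, v). x v - x u) ` (V \<times> V))" using assms(1) by simp
  then obtain \<delta> where "0 < \<delta>"
    and \<delta>: "\<And>t. t \<in> (\<lambda>(u, v). x v - x u) ` (V \<times> V) \<Longrightarrow> t \<noteq> 0 \<Longrightarrow> \<delta> \<le> dist 0 t"
    using finite_set_avoid[where a = 0] by meson
  have "x u + \<delta> / 2 < x v" if "u \<in> V" "v \<in> V" "x u < x v" for u v
  proof -
    have "\<delta> \<le> dist 0 (x v - x u)" using that by (intro \<delta>) auto
    then show ?thesis using that(3) \<open>0 < \<delta>\<close> by (simp add: dist_real_def)
  qed
  with assms(2-4) \<open>0 < \<delta>\<close> interpret reach_construction V E A B x fwd bwd "\<delta> / 2"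
    by unfold_locales simp_all
  show ?thesis using grounded_nice_L by blast
qed

lemma mutual_reach_rep_of_stick_rep:
  fixes S :: "'v \<Rightarrow> real \<times> real" and s :: "'v \<Rightarrow> real"
  defines "p \<equiv> \<lambda>v. fst (S v)" and "h \<equiv> \<lambda>v. snd (S v)"
  assumes stick: "stick_rep V E A B c S"
    and gap: "\<And>u v k. u \<in> V \<Longrightarrow> v \<in> V \<Longrightarrow> k \<in> {0, h u, h v} \<Longrightarrow> p u - p v \<noteq> k \<Longrightarrow>
               2 * e \<le> \<bar>p u - p v - k\<bar>"
    and s: "inj_on s V" "s ` V \<subseteq> {0..<e}"
  shows "mutual_reach_rep V E A B (\<lambda>v. s v - p v - (if v \<in> A then e else 0))
           (\<lambda>a. s a - p a + h a + e) (\<lambda>b. s b - p b - h b - 2 * e)"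
proof -
  have bip: "bipartition V E A B" and h_pos: "\<And>v. v \<in> V \<Longrightarrow> 0 < h v"
    and E_sticks: "\<And>a b. a \<in> A \<Longrightarrow> b \<in> B \<Longrightarrow> E a b \<longleftrightarrow> vstick c (S a) \<inter> hstick c (S b) \<noteq> {}"
    using stick by (auto simp: stick_rep_def h_def)
  have AB: "A \<inter> B = {}" "A \<union> B = V" using bip by (auto simp: bipartition_def)
  have s_bounds: "0 \<le> s v" "s v < e" if "v \<in> V" for v using s(2) that by auto
  have inj: "u = v" if "u \<in> V" "v \<in> V"
    and eq: "s u - p u - (if u \<in> A then e else 0) = s v - p v - (if v \<in> A then e else 0)" for u v
  proof -
    have "p u = p v"
    proof (rule ccontr)
      assume "p u \<noteq> p v"
      then have "2 * e \<le> \<bar>p u - p v\<bar>" using gap[of u v 0] that by simp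
      then show False using eq s_bounds[OF that(1)] s_bounds[OF that(2)] by (auto split: if_splits)
    qed
    then have "s u = s v" using eq s_bounds[OF that(1)] s_bounds[OF that(2)] by (auto split: if_splits)
    then show ?thesis using s(1) that by (meson inj_onD)
  qed
  have reach: "s b - p b - h b - 2 * e \<noteq> s a - p a - e \<and>
      (E a b \<longleftrightarrow> s a - p a - e < s b - p b \<and> s b - p b \<le> s a - p a + h a + e \<and>
                  s b - p b - h b - 2 * e \<le> s a - p a - e)"
    if "a \<in> A" "b \<in> B" for a b
  proof -
    have V: "a \<in> V" "b \<in> V" using AB that by auto
    have "E a b \<longleftrightarrow> 0 \<le> p a - p b \<and> p a - p b \<le> h b \<and> p a - p b \<le> h a"
      using E_sticks[OF that] vstick_inter_hstick_nonempty_iff[of c "p a" "h a" "p b" "h b"]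
      by (simp add: p_def h_def)
    txt \<open>With \<open>D = p a - p b\<close> and \<open>\<sigma> = s a - s b \<in> (-e, e)\<close> the three comparisons read
      \<open>-D < e - \<sigma>\<close>, \<open>D - h a \<le> e + \<sigma>\<close> and \<open>D - h b \<le> e + \<sigma>\<close>, with right-hand sides in \<open>(0, 2e)\<close>.\<close>
    then show ?thesis
      using gap[OF V, of 0] gap[OF V, of "h a"] gap[OF V, of "h b"]
        s_bounds[OF V(1)] s_bounds[OF V(2)]
      by (auto simp: abs_if)
  qed
  have fwd: "s a - p a - e < s a - p a + h a + e" if "a \<in> A" for a
    using h_pos[of a] s_bounds[of a] that AB by auto
  show ?thesis
    unfolding mutual_reach_rep_def using inj fwd reach AB(1) by (auto intro: inj_onI)
qed

lemma stick_rep_imp_mutual_reach_rep: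
  assumes "finite V" "stick_rep V E A B c S"
  shows "\<exists>x fwd bwd. mutual_reach_rep V E A B x fwd bwd"
proof -
  define p where "p v = fst (S v)" for v
  define h where "h v = snd (S v)" for v
  define T where "T = (\<lambda>(u, v, k). p u - p v - k) ` (V \<times> V \<times> insert 0 (h ` V))"
  have "finite T" using assms(1) by (simp add: T_def)
  then obtain \<delta> where "0 < \<delta>" and \<delta>: "\<And>t. t \<in> T \<Longrightarrow> t \<noteq> 0 \<Longrightarrow> \<delta> \<le> dist 0 t"
    using finite_set_avoid[where a = 0] by meson
  have gap: "2 * (\<delta> / 2) \<le> \<bar>p u - p v - k\<bar>"
    if "u \<in> V" "v \<in> V" "k \<in> {0, h u, h v}" "p u - p v \<noteq> k" for u v k
  proof -
    have "p u - p v - k \<in> T"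
      unfolding T_def using that by (intro image_eqI[where x = "(u, v, k)"]) auto
    then show ?thesis using \<delta> that(4) by (simp add: dist_real_def)
  qed
  obtain s where "inj_on s V" "s ` V \<subseteq> {0..<\<delta> / 2}"
    using finite_inj_on_into_Ico[OF assms(1)] \<open>0 < \<delta>\<close> by (meson half_gt_zero)
  then show ?thesis
    using mutual_reach_rep_of_stick_rep[OF assms(2), of "\<delta> / 2" s] gap
    unfolding p_def h_def by blast
qed

theorem proposition1:
  fixes V :: "'v set" and E :: "'v \<Rightarrow> 'v \<Rightarrow> bool"
  assumes "finite V" and "simple_graph V E"
  shows "(stick_graph V E \<longrightarrow> grounded_L_graph V E) \<and>
         (\<forall>A B c S. stick_rep V E A B c S \<longrightarrow>
            (\<exists>L. grounded_L_rep V E L \<and> nice_L_rep V A B L))"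
proof -
  have nice: "\<exists>L. grounded_L_rep V E L \<and> nice_L_rep V A B L"
    if stick: "stick_rep V E A B c S" for A B c S
  proof -
    obtain x fwd bwd where "mutual_reach_rep V E A B x fwd bwd"
      using stick_rep_imp_mutual_reach_rep[OF assms(1) stick] by blast
    moreover have "bipartition V E A B" using stick by (simp add: stick_rep_def)
    ultimately show ?thesis using mutual_reach_rep_imp_nice_grounded_L_rep assms by blast
  qed
  then show ?thesis unfolding stick_graph_def grounded_L_graph_def by blast
qed

end
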